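(* In the setting below, the map $\varphi:B\to \mathcal A$ defined by $\varphi(a_g\delta_g\#v_h)=a_g\otimes u_g\otimes v_h$ ($a_g\in E_g$) is a homomorphism of $K$-algebras, and there is an exact sequence of $K$-algebras $$0\longrightarrow D\longrightarrow B\xrightarrow{\ \varphi\ }\varphi(C)\longrightarrow 0,$$ where $\varphi(B)=\varphi(C)$ and $\ker\varphi=D$. In particular $\varphi$ restricts to an injective algebra homomorphism on $C$, and $B_0$ is isomorphic to a subalgebra of $\mathcal A$.
   Context: Groupoid conventions. A groupoid is a small category with all morphisms invertible, regarded as the set $G$ of morphisms. For $g\in G$ we have $d(g)=g^{-1}g$ and $r(g)=gg^{-1}$. The product $gh$ is defined iff $d(g)=r(h)$, and then $d(gh)=d(h)$, $r(gh)=r(g)$. $G^2=\{(g,h): d(g)=r(h)\}$, and $G_0$ is the set of identities. Actions. An action of $G$ on a ring $R$ is a pair $\beta=(\{E_g\},\{\beta_g\})$ where each $E_g=E_{r(g)}$ is an ideal of $R$, each $\beta_g:E_{g^{-1}}\to E_g$ is a ring isomorphism, $\beta_e=\mathrm{id}$ for $e\in G_0$, and $\beta_g\beta_h=\beta_{gh}$ on $E_{h^{-1}}$ for $(g,h)\in G^2$. Setting. $K$ is a commutative unital ring and $G$ is a finite groupoid. $R$ is a unital $K$-algebra with an action $\beta$ of $G$ by $K$-linear maps such that each $E_e$, $e\in G_0$, has an identity $1_e$, and $R=\bigoplus_{e\in G_0}E_e$. Put $1_g=1_{r(g)}$. Skew groupoid ring and $B$: - $R\star_\beta G=\bigoplus_g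 E_g\delta_g$ with $(x\delta_g)(y\delta_h)=x\beta_g(y)\delta_{gh}$ if $(g,h)\in G^2$ and $0$ otherwise; it is $G$-graded with $g$-component $E_g\delta_g$. - $KG^*$ has $K$-basis $\{v_g\}$ with $v_gv_h=\delta_{g,h}v_g$; it acts on $G$-graded algebras by $v_h\cdot a=a_h$ (the $h$-component). - $B=(R\star_\beta G)\#KG^*=\bigoplus_{g,h}E_g\delta_g\#v_h$, with $(x\#v_g)(y\#v_h)=x(v_{gh^{-1}}\cdot y)\#v_h$ if $d(g)=d(h)$, and $0$ otherwise. - $C=\bigoplus_{d(g)=r(h)}E_g\delta_g\#v_h$, $D=\bigoplus_{d(g)\neq r(h)}E_g\delta_g\#v_h$, and $B_0=\bigoplus_{d(g)=r(g)=r(h)}E_g\delta_g\#v_h$. Weak bialgebras $KG$ and $KG^*$: - $KG$ has basis $\{u_g\}$, $u_gu_h=u_{gh}$ if $d(g)=r(h)$ (else $0$), $1=\sum_{e\in G_0}u_e$, $\Delta(u_g)=u_g\otimes u_g$, $\varepsilon(u_g)=1$, and antipode $S(u_g)=u_{g^{-1}}$. - $KG^*$ has $\Delta(v_g)=\sum_{d(h)=d(g)}v_{gh^{-1}}\otimes v_h$, $\varepsilon(\sum a_gv_g)=\sum_{e\in G_0}a_e$, and antipode $S(v_g)=v_{g^{-1}}$. - For a weak bialgebra $H$, $\varepsilon_t(x)=\sum\varepsilon(1_{(1)}x)1_{(2)}$ and $H_t=\varepsilon_t(H)$. One has $KG_t=\bigoplus_{e\in G_0}Ku_e$ and $KG^*_t=\sum_{e\in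 G_0}K\sum_{h: r(h)=e}v_h$. The algebra $\mathcal A$: - $R$ is a $KG$-module algebra via $u_g\cdot r=\beta_g(r1_{g^{-1}})$, and a right $KG_t$-module via $r\cdot z=S(z)\cdot r$; $KG$ is a left $KG_t$-module by multiplication. - $X=R\otimes_{KG_t}KG$ is a unital $K$-algebra with $(r\otimes u_g)(s\otimes u_h)=r(u_g\cdot s)\otimes u_gu_h$. - $X$ is a $KG^*$-module algebra via $v_k\cdot(r\otimes u_g)=\delta_{k,g}\,r\otimes u_g$, and a right $KG^*_t$-module via $x\cdot z=S(z)\cdot x$; $KG^*$ is a left $KG^*_t$-module by multiplication. - $\mathcal A=X\otimes_{KG^*_t}KG^*$ is the unital $K$-algebra with $(x\otimes v_g)(y\otimes v_h)=x(v_{gh^{-1}}\cdot y)\otimes v_h$ if $d(g)=d(h)$ and $0$ otherwise, and identity $1_R\otimes1_{KG}\otimes1_{KG^*}$. Elements of $\mathcal A$ are written $r\otimes u_g\otimes v_h$. *)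

theory Defs
  imports Main
begin

text \<open>A groupoid is given by its set of morphisms G (a subset of a type 'g), a
 multiplication mul (only meaningful on composable pairs) and an inversion iv.
 d g = g^-1 g and r g = g g^-1, exactly as in the paper.\<close>

definition gd :: "('g \<Rightarrow> 'g \<Rightarrow> 'g) \<Rightarrow> ('g \<Rightarrow> 'g) \<Rightarrow> 'g \<Rightarrow> 'g" where
  "gd mul iv g = mul (iv g) g"

definition gr :: "('g \<Rightarrow> 'g \<Rightarrow> 'g) \<Rightarrow> ('g \<Rightarrow> 'g) \<Rightarrow> 'g \<Rightarrow> 'g" where
  "gr mul iv g = mul g (iv g)"

definition groupoid :: "'g set \<Rightarrow> ('g \<Rightarrow> 'g \<Rightarrow> 'g) \<Rightarrow> ('g \<Rightarrow> 'g) \<Rightarrow> bool" where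
  "groupoid G mul iv \<longleftrightarrow>
     (\<forall>g\<in>G. iv g \<in> G \<and> iv (iv g) = g) \<and>
     (\<forall>g\<in>G. \<forall>h\<in>G. gd mul iv g = gr mul iv h \<longrightarrow>
         mul g h \<in> G \<and> gd mul iv (mul g h) = gd mul iv h \<and> gr mul iv (mul g h) = gr mul iv g) \<and>
     (\<forall>g\<in>G. \<forall>h\<in>G. \<forall>k\<in>G. gd mul iv g = gr mul iv h \<and> gd mul iv h = gr mul iv k \<longrightarrow>
         mul (mul g h) k = mul g (mul h k)) \<and>
     (\<forall>g\<in>G. gd mul iv g \<in> G \<and> gr mul iv g \<in> G \<and>
         gd mul iv (gd mul iv g) = gd mul iv g \<and> gr mul iv (gd mul iv g) = gd mul iv g \<and>
         gd mul iv (gr mul iv g) = gr mul iv g \<and> gr mul iv (gr mul iv g) = gr mul iv g) \<and>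
     (\<forall>g\<in>G. mul (gr mul iv g) g = g \<and> mul g (gd mul iv g) = g) \<and>
     (\<forall>g\<in>G. gd mul iv (iv g) = gr mul iv g \<and> gr mul iv (iv g) = gd mul iv g)"

definition gobj :: "'g set \<Rightarrow> ('g \<Rightarrow> 'g \<Rightarrow> 'g) \<Rightarrow> ('g \<Rightarrow> 'g) \<Rightarrow> 'g set" where
  "gobj G mul iv = gd mul iv ` G"

text \<open>R is the whole type 'r (a unital ring), K is the type 'k, and sm is the
 scalar multiplication making R a K-algebra.\<close>

definition kalg :: "('k::comm_ring_1 \<Rightarrow> 'r::ring_1 \<Rightarrow> 'r) \<Rightarrow> bool" where
  "kalg sm \<longleftrightarrow>
     (\<forall>c x y. sm c (x + y) = sm c x + sm c y) \<and>
     (\<forall>c c' x. sm (c + c') x = sm c x + sm c' x) \<and>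
     (\<forall>c c' x. sm (c * c') x = sm c (sm c' x)) \<and>
     (\<forall>x. sm 1 x = x) \<and>
     (\<forall>c x y. sm c (x * y) = sm c x * y \<and> sm c (x * y) = x * sm c y)"

definition ring_ideal :: "'r::ring_1 set \<Rightarrow> bool" where
  "ring_ideal I \<longleftrightarrow> 0 \<in> I \<and> (\<forall>x\<in>I. \<forall>y\<in>I. x + y \<in> I) \<and> (\<forall>x\<in>I. - x \<in> I) \<and>
     (\<forall>x\<in>I. \<forall>y. y * x \<in> I \<and> x * y \<in> I)"

definition setting ::
  "'g set \<Rightarrow> ('g \<Rightarrow> 'g \<Rightarrow> 'g) \<Rightarrow> ('g \<Rightarrow> 'g) \<Rightarrow> ('k::comm_ring_1 \<Rightarrow> 'r::ring_1 \<Rightarrow> 'r) \<Rightarrow>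
   ('g \<Rightarrow> 'r set) \<Rightarrow> ('g \<Rightarrow> 'r \<Rightarrow> 'r) \<Rightarrow> ('g \<Rightarrow> 'r) \<Rightarrow> bool" where
  "setting G mul iv sm E \<beta> one \<longleftrightarrow>
     groupoid G mul iv \<and> finite G \<and> kalg sm \<and>
     (\<forall>g\<in>G. E g = E (gr mul iv g) \<and> ring_ideal (E g)) \<and>
     (\<forall>g\<in>G. bij_betw (\<beta> g) (E (iv g)) (E g) \<and>
        (\<forall>x\<in>E (iv g). \<forall>y\<in>E (iv g). \<beta> g (x + y) = \<beta> g x + \<beta> g y \<and> \<beta> g (x * y) = \<beta> g x * \<beta> g y) \<and>
        (\<forall>c. \<forall>x\<in>E (iv g). \<beta> g (sm c x) = sm c (\<beta> g x))) \<and>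
     (\<forall>e\<in>gobj G mul iv. \<forall>x\<in>E e. \<beta> e x = x) \<and>
     (\<forall>g\<in>G. \<forall>h\<in>G. gd mul iv g = gr mul iv h \<longrightarrow>
        (\<forall>x\<in>E (iv h). \<beta> g (\<beta> h x) = \<beta> (mul g h) x)) \<and>
     (\<forall>e\<in>gobj G mul iv. one e \<in> E e \<and> (\<forall>x\<in>E e. one e * x = x \<and> x * one e = x)) \<and>
     (\<forall>x. \<exists>f. (\<forall>e\<in>gobj G mul iv. f e \<in> E e) \<and> x = (\<Sum>e\<in>gobj G mul iv. f e)) \<and>
     (\<forall>f. (\<forall>e\<in>gobj G mul iv. f e \<in> E e) \<and> (\<Sum>e\<in>gobj G mul iv. f e) = 0 \<longrightarrow>
        (\<forall>e\<in>gobj G mul iv. f e = 0))"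

text \<open>An element of B = sum_{g,h} E_g delta_g # v_h is represented by its coefficient
 function b, where b (g,h) is the coefficient of delta_g # v_h.\<close>

definition Bset :: "'g set \<Rightarrow> ('g \<Rightarrow> 'r::ring_1 set) \<Rightarrow> ('g \<times> 'g \<Rightarrow> 'r) set" where
  "Bset G E = {b. (\<forall>g\<in>G. \<forall>h\<in>G. b (g, h) \<in> E g) \<and> (\<forall>g h. g \<notin> G \<or> h \<notin> G \<longrightarrow> b (g, h) = 0)}"

definition Cset :: "'g set \<Rightarrow> ('g \<Rightarrow> 'g \<Rightarrow> 'g) \<Rightarrow> ('g \<Rightarrow> 'g) \<Rightarrow> ('g \<Rightarrow> 'r::ring_1 set) \<Rightarrow> ('g \<times> 'g \<Rightarrow> 'r) set" where
  "Cset G mul iv E = {b \<in> Bset G E. \<forall>g h. gd mul iv g \<noteq> gr mul iv h \<longrightarrow> b (g, h) = 0}"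

definition Dset :: "'g set \<Rightarrow> ('g \<Rightarrow> 'g \<Rightarrow> 'g) \<Rightarrow> ('g \<Rightarrow> 'g) \<Rightarrow> ('g \<Rightarrow> 'r::ring_1 set) \<Rightarrow> ('g \<times> 'g \<Rightarrow> 'r) set" where
  "Dset G mul iv E = {b \<in> Bset G E. \<forall>g h. gd mul iv g = gr mul iv h \<longrightarrow> b (g, h) = 0}"

definition B0set :: "'g set \<Rightarrow> ('g \<Rightarrow> 'g \<Rightarrow> 'g) \<Rightarrow> ('g \<Rightarrow> 'g) \<Rightarrow> ('g \<Rightarrow> 'r::ring_1 set) \<Rightarrow> ('g \<times> 'g \<Rightarrow> 'r) set" where
  "B0set G mul iv E = {b \<in> Bset G E. \<forall>g h.
      \<not> (gd mul iv g = gr mul iv g \<and> gr mul iv g = gr mul iv h) \<longrightarrow> b (g, h) = 0}"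

text \<open>Product in B, obtained by bilinear extension of
 (x delta_g # v_g')(y delta_h # v_h') = x (v_{g' h'^-1} . y delta_h) # v_h' if d g' = d h' (else 0),
 where v_k . (y delta_h) = [k = h] y delta_h and
 (x delta_g)(y delta_h) = x beta_g(y) delta_{gh} if d g = r h (else 0).\<close>

definition multB ::
  "'g set \<Rightarrow> ('g \<Rightarrow> 'g \<Rightarrow> 'g) \<Rightarrow> ('g \<Rightarrow> 'g) \<Rightarrow> ('g \<Rightarrow> 'r::ring_1 \<Rightarrow> 'r) \<Rightarrow>
   ('g \<times> 'g \<Rightarrow> 'r) \<Rightarrow> ('g \<times> 'g \<Rightarrow> 'r) \<Rightarrow> ('g \<times> 'g \<Rightarrow> 'r)" where
  "multB G mul iv \<beta> b b' = (\<lambda>(c, h').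
     \<Sum>g\<in>G. \<Sum>g'\<in>G.
       (if h' \<in> G \<and> gd mul iv g' = gd mul iv h' \<and>
           gd mul iv g = gr mul iv (mul g' (iv h')) \<and> mul g (mul g' (iv h')) = c
        then b (g, g') * \<beta> g (b' (mul g' (iv h'), h')) else 0))"

definition kgset :: "'g set \<Rightarrow> ('g \<Rightarrow> 'k::comm_ring_1) set" where
  "kgset G = {a. \<forall>g. g \<notin> G \<longrightarrow> a g = 0}"

definition kg_t :: "'g set \<Rightarrow> ('g \<Rightarrow> 'g \<Rightarrow> 'g) \<Rightarrow> ('g \<Rightarrow> 'g) \<Rightarrow> ('g \<Rightarrow> 'k::comm_ring_1) set" where
  "kg_t G mul iv = {a. \<forall>g. g \<notin> gobj G mul iv \<longrightarrow> a g = 0}"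

text \<open>KG^*_t = sum_{e in G_0} K (sum_{r(h)=e} v_h)\<close>
definition kgstar_t :: "'g set \<Rightarrow> ('g \<Rightarrow> 'g \<Rightarrow> 'g) \<Rightarrow> ('g \<Rightarrow> 'g) \<Rightarrow> ('g \<Rightarrow> 'k::comm_ring_1) set" where
  "kgstar_t G mul iv = {a. \<exists>c. \<forall>h. a h = (if h \<in> G then c (gr mul iv h) else 0)}"

text \<open>Product in KG (u_g u_h = u_gh if d g = r h, else 0); the product in KG^* is pointwise.\<close>
definition kg_mult :: "'g set \<Rightarrow> ('g \<Rightarrow> 'g \<Rightarrow> 'g) \<Rightarrow> ('g \<Rightarrow> 'g) \<Rightarrow>
    ('g \<Rightarrow> 'k::comm_ring_1) \<Rightarrow> ('g \<Rightarrow> 'k) \<Rightarrow> ('g \<Rightarrow> 'k)" where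
  "kg_mult G mul iv z w = (\<lambda>c. \<Sum>a\<in>G. \<Sum>b\<in>G.
      (if gd mul iv a = gr mul iv b \<and> mul a b = c then z a * w b else 0))"

definition antip :: "'g set \<Rightarrow> ('g \<Rightarrow> 'g) \<Rightarrow> ('g \<Rightarrow> 'k::comm_ring_1) \<Rightarrow> ('g \<Rightarrow> 'k)" where
  "antip G iv a = (\<lambda>g. if g \<in> G then a (iv g) else 0)"

definition kg_act :: "'g set \<Rightarrow> ('g \<Rightarrow> 'g \<Rightarrow> 'g) \<Rightarrow> ('g \<Rightarrow> 'g) \<Rightarrow> ('k::comm_ring_1 \<Rightarrow> 'r::ring_1 \<Rightarrow> 'r) \<Rightarrow>
    ('g \<Rightarrow> 'r \<Rightarrow> 'r) \<Rightarrow> ('g \<Rightarrow> 'r) \<Rightarrow> ('g \<Rightarrow> 'k) \<Rightarrow> 'r \<Rightarrow> 'r" where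
  "kg_act G mul iv sm \<beta> one a x = (\<Sum>g\<in>G. sm (a g) (\<beta> g (x * one (gr mul iv (iv g)))))"

inductive_set spanK :: "('k \<Rightarrow> 'r::ring_1 \<Rightarrow> 'r) \<Rightarrow> ('i \<Rightarrow> 'r) set \<Rightarrow> ('i \<Rightarrow> 'r) set"
  for sm :: "'k \<Rightarrow> 'r \<Rightarrow> 'r" and S :: "('i \<Rightarrow> 'r) set" where
  zero: "(\<lambda>i. 0) \<in> spanK sm S"
| base: "x \<in> S \<Longrightarrow> x \<in> spanK sm S"
| add: "x \<in> spanK sm S \<Longrightarrow> y \<in> spanK sm S \<Longrightarrow> (\<lambda>i. x i + y i) \<in> spanK sm S"
| scale: "x \<in> spanK sm S \<Longrightarrow> (\<lambda>i. sm c (x i)) \<in> spanK sm S"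

text \<open>Since KG is K-free on {u_g}, R \<otimes>_K KG is identified with functions x : G \<rightarrow> R
 (x g = coefficient of u_g). X = R \<otimes>_{KG_t} KG is its quotient by the K-span of
 (x . z) \<otimes> w - x \<otimes> (z w), x in R, z in KG_t, w in KG, where x . z = S(z) . x.\<close>

definition relX :: "'g set \<Rightarrow> ('g \<Rightarrow> 'g \<Rightarrow> 'g) \<Rightarrow> ('g \<Rightarrow> 'g) \<Rightarrow> ('k::comm_ring_1 \<Rightarrow> 'r::ring_1 \<Rightarrow> 'r) \<Rightarrow>
    ('g \<Rightarrow> 'r \<Rightarrow> 'r) \<Rightarrow> ('g \<Rightarrow> 'r) \<Rightarrow> ('g \<Rightarrow> 'r) set" where
  "relX G mul iv sm \<beta> one =
     {(\<lambda>c. sm (w c) (kg_act G mul iv sm \<beta> one (antip G iv z) x) - sm (kg_mult G mul iv z w c) x)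
      | x z w. z \<in> kg_t G mul iv \<and> w \<in> kgset G}"

definition NX where
  "NX G mul iv sm \<beta> one = spanK sm (relX G mul iv sm \<beta> one)"

definition Xrep :: "'g set \<Rightarrow> ('g \<Rightarrow> 'r::ring_1) set" where
  "Xrep G = {x. \<forall>g. g \<notin> G \<longrightarrow> x g = 0}"

text \<open>Since KG^* is K-free on {v_h}, X \<otimes>_K KG^* is identified with functions F : G \<times> G \<rightarrow> R
 modulo NX in the first variable (F (g,h) = coefficient of r \<otimes> u_g \<otimes> v_h).
 \<A> = X \<otimes>_{KG^*_t} KG^* is the quotient by the K-span of relA1 (coming from NX) and
 relA2: (x . z) \<otimes> w - x \<otimes> (z w), x in X, z in KG^*_t, w in KG^*, where x . z = S(z) . x and
 v_k . (r \<otimes> u_g) = [k = g] r \<otimes> u_g.\<close>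

definition relA1 where
  "relA1 G mul iv sm \<beta> one =
     {(\<lambda>(a, k). if k = h then n a else 0) | n h. n \<in> NX G mul iv sm \<beta> one \<and> h \<in> G}"

definition relA2 :: "'g set \<Rightarrow> ('g \<Rightarrow> 'g \<Rightarrow> 'g) \<Rightarrow> ('g \<Rightarrow> 'g) \<Rightarrow> ('k::comm_ring_1 \<Rightarrow> 'r::ring_1 \<Rightarrow> 'r) \<Rightarrow>
    ('g \<times> 'g \<Rightarrow> 'r) set" where
  "relA2 G mul iv sm =
     {(\<lambda>(a, h). sm (w h) (sm (antip G iv z a) (x a)) - sm (z h * w h) (x a))
      | x z w. x \<in> Xrep G \<and> z \<in> kgstar_t G mul iv \<and> w \<in> kgset G}"

definition NA where
  "NA G mul iv sm \<beta> one = spanK sm (relA1 G mul iv sm \<beta> one \<union> relA2 G mul iv sm)"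

definition eqA where
  "eqA G mul iv sm \<beta> one F F' \<longleftrightarrow> (\<lambda>i. F i - F' i) \<in> NA G mul iv sm \<beta> one"

text \<open>Product in \<A> on representatives, bilinear extension of
 (x \<otimes> v_g)(y \<otimes> v_h) = x (v_{g h^-1} . y) \<otimes> v_h if d g = d h (else 0), with
 (r \<otimes> u_a)(s \<otimes> u_b) = r (u_a . s) \<otimes> u_a u_b in X.\<close>
definition multA ::
  "'g set \<Rightarrow> ('g \<Rightarrow> 'g \<Rightarrow> 'g) \<Rightarrow> ('g \<Rightarrow> 'g) \<Rightarrow> ('g \<Rightarrow> 'r::ring_1 \<Rightarrow> 'r) \<Rightarrow> ('g \<Rightarrow> 'r) \<Rightarrow>
   ('g \<times> 'g \<Rightarrow> 'r) \<Rightarrow> ('g \<times> 'g \<Rightarrow> 'r) \<Rightarrow> ('g \<times> 'g \<Rightarrow> 'r)" where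
  "multA G mul iv \<beta> one F F' = (\<lambda>(c, h).
     \<Sum>a\<in>G. \<Sum>g\<in>G.
       (if h \<in> G \<and> gd mul iv g = gd mul iv h \<and>
           gd mul iv a = gr mul iv (mul g (iv h)) \<and> mul a (mul g (iv h)) = c
        then F (a, g) * \<beta> a (F' (mul g (iv h), h) * one (gr mul iv (iv a))) else 0))"

definition tens3 :: "'r::ring_1 \<Rightarrow> 'g \<Rightarrow> 'g \<Rightarrow> ('g \<times> 'g \<Rightarrow> 'r)" where
  "tens3 x g h = (\<lambda>(a, k). if a = g \<and> k = h then x else 0)"

definition phi :: "'g set \<Rightarrow> ('g \<times> 'g \<Rightarrow> 'r::ring_1) \<Rightarrow> ('g \<times> 'g \<Rightarrow> 'r)" where
  "phi G b = (\<lambda>i. \<Sum>p\<in>G \<times> G. tens3 (b p) (fst p) (snd p) i)"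

end

theory Submission
  imports Defs
begin

(*
  On coefficient functions phi is the identity, so it is additive and K-linear for free, and it is
  multiplicative because the product of \<A> differs from that of B only by a right factor 1_{d a}
  acting on elements of E_{d a}.

  The kernel is read off from the relations defining \<A>: every relation F satisfies
  F(a,h) 1_{r a} = 0 whenever d a = r h (for the relations of X both sides reduce to
  z_{r c} x 1_{r c}; for the KG*_t-balancing relations because z is constant on the fibres of r).
  As coefficients in E_a are fixed by 1_{r a}, an element of B in the kernel vanishes on composable
  pairs, i.e. lies in D. Conversely each elementary tensor with d g \<noteq> r h is itself a relation.
*)

lemma ring_ideal_diff: "ring_ideal I \<Longrightarrow> x \<in> I \<Longrightarrow> y \<in> I \<Longrightarrow> x - y \<in> I"
  unfolding ring_ideal_def by (metis diff_conv_add_uminus)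

lemma ring_ideal_sum: "ring_ideal I \<Longrightarrow> (\<And>a. a \<in> S \<Longrightarrow> f a \<in> I) \<Longrightarrow> (\<Sum>a\<in>S. f a) \<in> I"
  by (induction S rule: infinite_finite_induct) (auto simp: ring_ideal_def)

lemma spanK_sum:
  "finite S \<Longrightarrow> (\<And>p. p \<in> S \<Longrightarrow> T p \<in> spanK sm X) \<Longrightarrow> (\<lambda>i. \<Sum>p\<in>S. T p i) \<in> spanK sm X"
proof (induction S rule: finite_induct)
  case empty
  then show ?case by (simp add: spanK.zero)
next
  case (insert p S)
  then have "(\<lambda>i. T p i + (\<Sum>p\<in>S. T p i)) \<in> spanK sm X" by (intro spanK.add) auto
  with insert show ?case by simp
qed

locale groupoid_on =
  fixes G :: "'g set" and mul :: "'g \<Rightarrow> 'g \<Rightarrow> 'g" and iv :: "'g \<Rightarrow> 'g"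
  assumes groupoid: "groupoid G mul iv"
begin

abbreviation "d \<equiv> gd mul iv"
abbreviation "r \<equiv> gr mul iv"

lemma groupoid_laws:
  "\<forall>g\<in>G. iv g \<in> G \<and> iv (iv g) = g"
  "\<forall>g\<in>G. \<forall>h\<in>G. d g = r h \<longrightarrow> mul g h \<in> G \<and> d (mul g h) = d h \<and> r (mul g h) = r g"
  "\<forall>g\<in>G. mul (r g) g = g"
  "\<forall>g\<in>G. d (iv g) = r g \<and> r (iv g) = d g"
  "\<forall>g\<in>G. d g \<in> G \<and> d (d g) = d g \<and> r (d g) = d g"
  using groupoid unfolding groupoid_def by simp_all

lemma inv_closed: "g \<in> G \<Longrightarrow> iv g \<in> G"
  and inv_inv: "g \<in> G \<Longrightarrow> iv (iv g) = g"
  and d_inv: "g \<in> G \<Longrightarrow> d (iv g) = r g"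
  and r_inv: "g \<in> G \<Longrightarrow> r (iv g) = d g"
  and r_mul_left: "g \<in> G \<Longrightarrow> mul (r g) g = g"
  using groupoid_laws by simp_all

lemma mul_closed: "g \<in> G \<Longrightarrow> h \<in> G \<Longrightarrow> d g = r h \<Longrightarrow> mul g h \<in> G"
  and d_mul: "g \<in> G \<Longrightarrow> h \<in> G \<Longrightarrow> d g = r h \<Longrightarrow> d (mul g h) = d h"
  and r_mul: "g \<in> G \<Longrightarrow> h \<in> G \<Longrightarrow> d g = r h \<Longrightarrow> r (mul g h) = r g"
  using groupoid_laws(2) by simp_all

lemma d_in_gobj: "g \<in> G \<Longrightarrow> d g \<in> gobj G mul iv"
  unfolding gobj_def by blast

lemma r_in_gobj: "g \<in> G \<Longrightarrow> r g \<in> gobj G mul iv"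
  unfolding gobj_def using d_inv inv_closed by (metis image_eqI)

lemma gobj_closed: "e \<in> gobj G mul iv \<Longrightarrow> e \<in> G"
  and gobj_d: "e \<in> gobj G mul iv \<Longrightarrow> d e = e"
  and gobj_r: "e \<in> gobj G mul iv \<Longrightarrow> r e = e"
  using groupoid_laws(5) unfolding gobj_def by auto

lemma gobj_inv: assumes "e \<in> gobj G mul iv" shows "iv e = e"
proof -
  have e: "e \<in> G" "d e = e" "r e = e" using assms gobj_closed gobj_d gobj_r by auto
  have "mul e (iv e) = iv e" using r_mul_left[OF inv_closed[OF e(1)]] r_inv[OF e(1)] e(2) by simp
  with e(3) show ?thesis unfolding gr_def by simp
qed

lemma finite_gobj: "finite G \<Longrightarrow> finite (gobj G mul iv)"
  unfolding gobj_def by simp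

end

locale k_algebra =
  fixes sm :: "'k::comm_ring_1 \<Rightarrow> 'r::ring_1 \<Rightarrow> 'r"
  assumes kalg: "kalg sm"
begin

lemma sm_add: "sm c (x + y) = sm c x + sm c y"
  and sm_add_scalar: "sm (c + c') x = sm c x + sm c' x"
  and sm_sm: "sm (c * c') x = sm c (sm c' x)"
  and sm_one: "sm 1 x = x"
  and sm_mult_right: "sm c (x * y) = sm c x * y"
  and sm_mult_left: "sm c (x * y) = x * sm c y"
  using kalg unfolding kalg_def by blast+

lemma sm_zero_scalar [simp]: "sm 0 x = 0"
  using sm_add_scalar[of 0 0 x] by simp

lemma sm_zero [simp]: "sm c 0 = 0"
  using sm_add[of c 0 0] by simp

end

locale skew_setting =
  fixes G :: "'g set" and mul :: "'g \<Rightarrow> 'g \<Rightarrow> 'g" and iv :: "'g \<Rightarrow> 'g"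
    and sm :: "'k::comm_ring_1 \<Rightarrow> 'r::ring_1 \<Rightarrow> 'r"
    and E :: "'g \<Rightarrow> 'r set" and \<beta> :: "'g \<Rightarrow> 'r \<Rightarrow> 'r" and one :: "'g \<Rightarrow> 'r"
  assumes setting: "setting G mul iv sm E \<beta> one"
begin

sublocale groupoid_on G mul iv
  using setting unfolding setting_def by unfold_locales simp

sublocale k_algebra sm
  using setting unfolding setting_def by unfold_locales simp

abbreviation "G0 \<equiv> gobj G mul iv"

lemma setting_laws:
  "finite G"
  "\<forall>g\<in>G. E g = E (r g) \<and> ring_ideal (E g)"
  "\<forall>g\<in>G. \<forall>x\<in>E (iv g). \<forall>y\<in>E (iv g). \<beta> g (x + y) = \<beta> g x + \<beta> g y"
  "\<forall>e\<in>G0. \<forall>x\<in>E e. \<beta> e x = x"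
  "\<forall>e\<in>G0. one e \<in> E e \<and> (\<forall>x\<in>E e. one e * x = x \<and> x * one e = x)"
  "\<forall>f. (\<forall>e\<in>G0. f e \<in> E e) \<and> (\<Sum>e\<in>G0. f e) = 0 \<longrightarrow> (\<forall>e\<in>G0. f e = 0)"
  using setting unfolding setting_def by (elim conjE; blast)+

lemma finite_G: "finite G"
  and E_r: "g \<in> G \<Longrightarrow> E g = E (r g)"
  and E_ideal: "g \<in> G \<Longrightarrow> ring_ideal (E g)"
  and beta_add: "g \<in> G \<Longrightarrow> x \<in> E (iv g) \<Longrightarrow> y \<in> E (iv g) \<Longrightarrow> \<beta> g (x + y) = \<beta> g x + \<beta> g y"
  and beta_gobj: "e \<in> G0 \<Longrightarrow> x \<in> E e \<Longrightarrow> \<beta> e x = x"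
  and one_in_E: "e \<in> G0 \<Longrightarrow> one e \<in> E e"
  and one_mult: "e \<in> G0 \<Longrightarrow> x \<in> E e \<Longrightarrow> one e * x = x"
  and mult_one: "e \<in> G0 \<Longrightarrow> x \<in> E e \<Longrightarrow> x * one e = x"
  and direct_sum_unique: "(\<And>e. e \<in> G0 \<Longrightarrow> f e \<in> E e) \<Longrightarrow> (\<Sum>e\<in>G0. f e) = 0 \<Longrightarrow> e \<in> G0 \<Longrightarrow> f e = 0"
  using setting_laws by blast+

lemma E_zero: "g \<in> G \<Longrightarrow> 0 \<in> E g"
  and E_add: "g \<in> G \<Longrightarrow> x \<in> E g \<Longrightarrow> y \<in> E g \<Longrightarrow> x + y \<in> E g"
  and E_uminus: "g \<in> G \<Longrightarrow> x \<in> E g \<Longrightarrow> - x \<in> E g"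
  and E_mult_left: "g \<in> G \<Longrightarrow> x \<in> E g \<Longrightarrow> y * x \<in> E g"
  and E_mult_right: "g \<in> G \<Longrightarrow> x \<in> E g \<Longrightarrow> x * y \<in> E g"
  using E_ideal unfolding ring_ideal_def by blast+

lemma E_diff: "g \<in> G \<Longrightarrow> x \<in> E g \<Longrightarrow> y \<in> E g \<Longrightarrow> x - y \<in> E g"
  using ring_ideal_diff[OF E_ideal] .

lemma mult_one_r: "g \<in> G \<Longrightarrow> x \<in> E g \<Longrightarrow> x * one (r g) = x"
  using mult_one r_in_gobj E_r by metis

lemma E_sm: assumes "g \<in> G" "x \<in> E g" shows "sm c x \<in> E g"
proof -
  have "sm c x = x * sm c (one (r g))"
    using sm_mult_left mult_one_r[OF assms] by metis
  with assms show ?thesis using E_mult_right by simp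
qed

lemma beta_zero: "g \<in> G \<Longrightarrow> \<beta> g 0 = 0"
  using beta_add[of g 0 0] E_zero inv_closed by simp

lemma E_gobj_disjoint:
  assumes "e \<in> G0" "e' \<in> G0" "e \<noteq> e'" "y \<in> E e" "y \<in> E e'"
  shows "y = 0"
proof -
  define f where "f k = (if k = e then y else 0) + (if k = e' then - y else 0)" for k
  have "f k \<in> E k" if "k \<in> G0" for k
    using that assms gobj_closed E_zero E_uminus unfolding f_def by auto
  moreover have "(\<Sum>k\<in>G0. f k) = 0"
    unfolding f_def using assms finite_gobj[OF finite_G] by (simp add: sum.distrib)
  ultimately have "f e = 0" using direct_sum_unique assms(1) by blast
  with assms(3) show ?thesis unfolding f_def by simp
qed

lemma mult_one_other:
  assumes "e \<in> G0" "e' \<in> G0" "e \<noteq> e'" "y \<in> E e"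
  shows "y * one e' = 0"
  using E_gobj_disjoint[OF assms(1-3)] E_mult_right[OF gobj_closed[OF assms(1)] assms(4)]
    E_mult_left[OF gobj_closed[OF assms(2)] one_in_E[OF assms(2)]] by blast

lemma kg_act_antip_mult_one:
  assumes z: "z \<in> kg_t G mul iv" and e: "e \<in> G0"
  shows "kg_act G mul iv sm \<beta> one (antip G iv z) x * one e = sm (z e) (x * one e)"
proof -
  have summand: "sm (antip G iv z g) (\<beta> g (x * one (r (iv g)))) * one e
      = (if g = e then sm (z e) (x * one e) else 0)" if g: "g \<in> G" for g
  proof (cases "iv g \<in> G0")
    case False
    then have "z (iv g) = 0" using z unfolding kg_t_def by blast
    moreover have "g \<noteq> e" using False e gobj_inv by metis
    ultimately show ?thesis using g unfolding antip_def by simp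
  next
    case True
    then have g_obj: "g \<in> G0" and "iv g = g" using inv_inv[OF g] gobj_inv by metis+
    then have "r (iv g) = g" "antip G iv z g = z g" using g gobj_r unfolding antip_def by simp_all
    moreover have "\<beta> g (x * one g) = x * one g"
      using beta_gobj[OF g_obj] E_mult_left[OF gobj_closed one_in_E] g_obj by blast
    moreover have "one g * one e = (if g = e then one e else 0)"
      using mult_one_other[OF g_obj e _ one_in_E[OF g_obj]] one_mult[OF e one_in_E[OF e]] by auto
    then have "x * one g * one e = (if g = e then x * one e else 0)"
      by (simp add: mult.assoc)
    ultimately show ?thesis by (simp add: sm_mult_right[symmetric])
  qed
  have "kg_act G mul iv sm \<beta> one (antip G iv z) x * one e
      = (\<Sum>g\<in>G. sm (antip G iv z g) (\<beta> g (x * one (r (iv g)))) * one e)"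
    unfolding kg_act_def by (simp add: sum_distrib_right)
  also have "\<dots> = (\<Sum>g\<in>G. if g = e then sm (z e) (x * one e) else 0)"
    using summand by (rule sum.cong[OF refl])
  also have "\<dots> = sm (z e) (x * one e)" using e gobj_closed finite_G by simp
  finally show ?thesis .
qed

lemma kg_mult_kg_t:
  assumes z: "z \<in> kg_t G mul iv" and c: "c \<in> G"
  shows "kg_mult G mul iv z w c = z (r c) * w c"
proof -
  have summand: "(if d a = r b \<and> mul a b = c then z a * w b else 0)
     = (if b = c then if a = r c then z a * w b else 0 else 0)" if a: "a \<in> G" and b: "b \<in> G" for a b
  proof (cases "a \<in> G0")
    case False
    then have "z a = 0" using z unfolding kg_t_def by blast
    moreover have "a \<noteq> r c" using False r_in_gobj[OF c] by blast
    ultimately show ?thesis by simp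
  next
    case True
    then have "d a = a" by (rule gobj_d)
    then have "d a = r b \<and> mul a b = c \<longleftrightarrow> b = c \<and> a = r c"
      using r_mul_left b c by auto
    then show ?thesis by simp
  qed
  have "kg_mult G mul iv z w c = (\<Sum>a\<in>G. \<Sum>b\<in>G. if b = c then if a = r c then z a * w b else 0 else 0)"
    unfolding kg_mult_def using summand by (intro sum.cong refl) auto
  also have "\<dots> = z (r c) * w c"
    using c r_in_gobj gobj_closed finite_G by simp
  finally show ?thesis .
qed

lemma NX_mult_one:
  assumes "n \<in> NX G mul iv sm \<beta> one" and c: "c \<in> G"
  shows "n c * one (r c) = 0"
  using assms(1) unfolding NX_def
proof (induction rule: spanK.induct)
  case (base n)
  then obtain x z w where n: "n = (\<lambda>c. sm (w c) (kg_act G mul iv sm \<beta> one (antip G iv z) x)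
      - sm (kg_mult G mul iv z w c) x)" and z: "z \<in> kg_t G mul iv"
    unfolding relX_def by blast
  have "n c * one (r c) = sm (w c) (kg_act G mul iv sm \<beta> one (antip G iv z) x * one (r c))
      - sm (z (r c) * w c) (x * one (r c))"
    unfolding n using kg_mult_kg_t[OF z c] by (simp add: left_diff_distrib sm_mult_right)
  also have "\<dots> = 0"
    using kg_act_antip_mult_one[OF z r_in_gobj[OF c]] by (simp add: sm_sm mult.commute)
  finally show ?case .
qed (simp_all add: distrib_right sm_mult_right[symmetric])

lemma NA_mult_one:
  assumes "F \<in> NA G mul iv sm \<beta> one" and a: "a \<in> G" and h: "h \<in> G" and "d a = r h"
  shows "F (a, h) * one (r a) = 0"
  using assms(1) unfolding NA_def
proof (induction rule: spanK.induct)
  case (base F)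
  then consider "F \<in> relA1 G mul iv sm \<beta> one" | "F \<in> relA2 G mul iv sm" by blast
  then show ?case
  proof cases
    case 1
    then obtain n k where F: "F = (\<lambda>(a, h). if h = k then n a else 0)"
      and n: "n \<in> NX G mul iv sm \<beta> one"
      unfolding relA1_def by blast
    show ?thesis using NX_mult_one[OF n a] unfolding F by simp
  next
    case 2
    then obtain x z w where F: "F = (\<lambda>(a, h). sm (w h) (sm (antip G iv z a) (x a)) - sm (z h * w h) (x a))"
      and z: "z \<in> kgstar_t G mul iv"
      unfolding relA2_def by blast
    obtain f where f: "\<And>k. z k = (if k \<in> G then f (r k) else 0)"
      using z unfolding kgstar_t_def by blast
    have "antip G iv z a = z h" using a h f inv_closed r_inv \<open>d a = r h\<close> unfolding antip_def by simp
    then show ?thesis unfolding F by (simp add: sm_sm[symmetric] mult.commute)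
  qed
qed (simp_all add: distrib_right sm_mult_right[symmetric])

lemma NA_composable_coeff_zero:
  assumes "F \<in> NA G mul iv sm \<beta> one" "a \<in> G" "h \<in> G" "d a = r h" "F (a, h) \<in> E a"
  shows "F (a, h) = 0"
  using NA_mult_one[OF assms(1-4)] mult_one_r[OF assms(2,5)] by simp

lemma phi_eq: "phi G b = (\<lambda>i. if i \<in> G \<times> G then b i else 0)"
proof
  fix i :: "'g \<times> 'g"
  have "phi G b i = (\<Sum>p\<in>G \<times> G. if p = i then b p else 0)"
    unfolding phi_def tens3_def by (intro sum.cong refl) (auto split: prod.splits)
  also have "\<dots> = (if i \<in> G \<times> G then b i else 0)" using finite_G by simp
  finally show "phi G b i = (if i \<in> G \<times> G then b i else 0)" .
qed

lemma phi_Bset: "b \<in> Bset G E \<Longrightarrow> phi G b = b"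
  unfolding phi_eq Bset_def by (auto simp: fun_eq_iff)

lemma eqA_iff: "eqA G mul iv sm \<beta> one F F' \<longleftrightarrow> (\<lambda>i. F i - F' i) \<in> NA G mul iv sm \<beta> one"
  unfolding eqA_def ..

lemma eqA_refl: "eqA G mul iv sm \<beta> one F F"
  unfolding eqA_def NA_def by (simp add: spanK.zero)

(* For d a \<noteq> r h take z = \<Sum>{v_k | r k = d a} in KG*_t: S(z) fixes x \<otimes> u_a while z v_h = 0,
   so the elementary tensor x \<otimes> u_a \<otimes> v_h is itself one of the defining relations of \<A>. *)
lemma tens3_in_NA:
  assumes a: "a \<in> G" and h: "h \<in> G" and "d a \<noteq> r h"
  shows "tens3 y a h \<in> NA G mul iv sm \<beta> one"
proof -
  define x where "x k = (if k = a then y else 0)" for k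
  define z where "z k = (if k \<in> G \<and> r k = d a then 1 else (0::'k))" for k
  define w where "w k = (if k = h then 1 else (0::'k))" for k
  have "(\<lambda>(a, h). sm (w h) (sm (antip G iv z a) (x a)) - sm (z h * w h) (x a)) \<in> relA2 G mul iv sm"
    unfolding relA2_def
  proof (intro CollectI exI conjI)
    show "x \<in> Xrep G" unfolding Xrep_def x_def using a by auto
    show "z \<in> kgstar_t G mul iv" unfolding kgstar_t_def z_def
      by (intro CollectI exI[of _ "\<lambda>e. if e = d a then 1 else 0"]) auto
    show "w \<in> kgset G" unfolding kgset_def w_def using h by auto
  qed (rule refl)
  moreover have "(\<lambda>(a, h). sm (w h) (sm (antip G iv z a) (x a)) - sm (z h * w h) (x a)) = tens3 y a h"
  proof -
    have "antip G iv z a = 1" unfolding antip_def z_def using a inv_closed r_inv by simp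
    moreover have "z h = 0" unfolding z_def using \<open>d a \<noteq> r h\<close> by auto
    ultimately show ?thesis by (auto simp: fun_eq_iff tens3_def x_def w_def sm_one)
  qed
  ultimately show ?thesis unfolding NA_def by (metis UnI2 spanK.base)
qed

lemma Dset_subset_NA:
  assumes b: "b \<in> Dset G mul iv E"
  shows "b \<in> NA G mul iv sm \<beta> one"
proof -
  have "b \<in> Bset G E" using b unfolding Dset_def by blast
  then have "b = (\<lambda>i. \<Sum>p\<in>G \<times> G. tens3 (b p) (fst p) (snd p) i)"
    using phi_Bset unfolding phi_def by simp
  also have "\<dots> \<in> NA G mul iv sm \<beta> one"
    unfolding NA_def
  proof (rule spanK_sum)
    show "finite (G \<times> G)" using finite_G by simp
    fix p assume "p \<in> G \<times> G"
    then obtain a h where p: "p = (a, h)" "a \<in> G" "h \<in> G" by auto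
    show "tens3 (b p) (fst p) (snd p) \<in> spanK sm (relA1 G mul iv sm \<beta> one \<union> relA2 G mul iv sm)"
    proof (cases "d a = r h")
      case True
      then have "tens3 (b p) (fst p) (snd p) = (\<lambda>i. 0)"
        using b p unfolding Dset_def tens3_def by (auto simp: fun_eq_iff)
      then show ?thesis by (simp add: spanK.zero)
    next
      case False
      with tens3_in_NA p show ?thesis unfolding NA_def by simp
    qed
  qed
  finally show ?thesis .
qed

lemma Bset_NA_composable_zero:
  assumes "b \<in> Bset G E" "b \<in> NA G mul iv sm \<beta> one" "d g = r h"
  shows "b (g, h) = 0"
  using assms NA_composable_coeff_zero[OF assms(2) _ _ assms(3)] unfolding Bset_def by blast

lemma Bset_diff: "b \<in> Bset G E \<Longrightarrow> b' \<in> Bset G E \<Longrightarrow> (\<lambda>i. b i - b' i) \<in> Bset G E"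
  unfolding Bset_def using E_diff by auto

lemma mul_inv_laws:
  assumes "a \<in> G" "g \<in> G" "h \<in> G" "d g = d h" "d a = r (mul g (iv h))"
  shows "mul g (iv h) \<in> G" "d (mul g (iv h)) = r h" "r (mul g (iv h)) = r g"
    and "mul a (mul g (iv h)) \<in> G" "d (mul a (mul g (iv h))) = r h" "r (mul a (mul g (iv h))) = r a"
proof -
  have "iv h \<in> G" "r (iv h) = d h" "d (iv h) = r h"
    using inv_closed r_inv d_inv assms(3) by auto
  then show k: "mul g (iv h) \<in> G" "d (mul g (iv h)) = r h" "r (mul g (iv h)) = r g"
    using mul_closed d_mul r_mul assms(2,4) by auto
  show "mul a (mul g (iv h)) \<in> G" "d (mul a (mul g (iv h))) = r h" "r (mul a (mul g (iv h))) = r a"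
    using mul_closed[OF assms(1) k(1)] d_mul[OF assms(1) k(1)] r_mul[OF assms(1) k(1)] k(2) assms(5)
    by auto
qed

lemma multB_Bset:
  assumes b: "b \<in> Bset G E" and b': "b' \<in> Bset G E"
  shows "multB G mul iv \<beta> b b' \<in> Bset G E"
  unfolding Bset_def
proof (intro CollectI conjI allI ballI impI)
  fix c h assume c: "c \<in> G" and h: "h \<in> G"
  show "multB G mul iv \<beta> b b' (c, h) \<in> E c"
    unfolding multB_def split
  proof (intro ring_ideal_sum[OF E_ideal[OF c]])
    fix a g assume a: "a \<in> G" and g: "g \<in> G"
    have "b (a, g) * y \<in> E c" if "d g = d h" "d a = r (mul g (iv h))" "mul a (mul g (iv h)) = c" for y
    proof -
      have "E c = E a" using mul_inv_laws(6)[OF a g h that(1,2)] that(3) E_r a c by metis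
      moreover have "b (a, g) \<in> E a" using b a g unfolding Bset_def by blast
      ultimately show ?thesis using E_mult_right a by simp
    qed
    then show "(if h \<in> G \<and> d g = d h \<and> d a = r (mul g (iv h)) \<and> mul a (mul g (iv h)) = c
        then b (a, g) * \<beta> a (b' (mul g (iv h), h)) else 0) \<in> E c"
      using E_zero[OF c] by auto
  qed
next
  fix c h :: 'g assume "c \<notin> G \<or> h \<notin> G"
  then have "\<not> (h \<in> G \<and> d g = d h \<and> d a = r (mul g (iv h)) \<and> mul a (mul g (iv h)) = c)"
    if "a \<in> G" "g \<in> G" for a g
    using mul_inv_laws(4)[OF that] by blast
  then show "multB G mul iv \<beta> b b' (c, h) = 0"
    unfolding multB_def split by (intro sum.neutral ballI) auto
qed

lemma multA_eq_multB:
  assumes b': "b' \<in> Bset G E"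
  shows "multA G mul iv \<beta> one b b' = multB G mul iv \<beta> b b'"
proof -
  have one_right: "b' (mul g (iv h), h) * one (r (iv a)) = b' (mul g (iv h), h)"
    if "a \<in> G" "g \<in> G" "h \<in> G" "d g = d h" "d a = r (mul g (iv h))" for a g h
  proof -
    have k: "mul g (iv h) \<in> G" by (rule mul_inv_laws(1)[OF that])
    then have "b' (mul g (iv h), h) \<in> E (d a)"
      using b' that(3,5) E_r[OF k] unfolding Bset_def by auto
    then show ?thesis using mult_one d_in_gobj that(1) r_inv by simp
  qed
  show ?thesis
  proof (rule ext, clarify)
    fix c h
    show "multA G mul iv \<beta> one b b' (c, h) = multB G mul iv \<beta> b b' (c, h)"
      unfolding multA_def multB_def using one_right by (auto intro!: sum.cong)
  qed
qed

lemma phi_multB: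
  "b \<in> Bset G E \<Longrightarrow> b' \<in> Bset G E \<Longrightarrow>
    phi G (multB G mul iv \<beta> b b') = multA G mul iv \<beta> one (phi G b) (phi G b')"
  using phi_Bset multB_Bset multA_eq_multB by simp

lemma phi_add: "phi G (\<lambda>i. b i + b' i) = (\<lambda>i. phi G b i + phi G b' i)"
  unfolding phi_eq by auto

lemma phi_sm: "phi G (\<lambda>i. sm c (b i)) = (\<lambda>i. sm c (phi G b i))"
  unfolding phi_eq by auto

lemma ker_phi: "{b \<in> Bset G E. eqA G mul iv sm \<beta> one (phi G b) (\<lambda>i. 0)} = Dset G mul iv E"
proof (intro equalityI subsetI)
  fix b assume "b \<in> {b \<in> Bset G E. eqA G mul iv sm \<beta> one (phi G b) (\<lambda>i. 0)}"
  then have "b \<in> Bset G E" "b \<in> NA G mul iv sm \<beta> one"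
    using phi_Bset by (auto simp: eqA_iff)
  then show "b \<in> Dset G mul iv E"
    unfolding Dset_def using Bset_NA_composable_zero by blast
next
  fix b assume "b \<in> Dset G mul iv E"
  then show "b \<in> {b \<in> Bset G E. eqA G mul iv sm \<beta> one (phi G b) (\<lambda>i. 0)}"
    using Dset_subset_NA phi_Bset unfolding Dset_def by (auto simp: eqA_iff)
qed

lemma Cset_subset_Bset: "Cset G mul iv E \<subseteq> Bset G E"
  unfolding Cset_def by blast

lemma phi_Bset_eq_phi_Cset:
  assumes b: "b \<in> Bset G E"
  shows "\<exists>c\<in>Cset G mul iv E. eqA G mul iv sm \<beta> one (phi G b) (phi G c)"
proof
  define c where "c = (\<lambda>(g, h). if d g = r h then b (g, h) else 0)"
  show c_C: "c \<in> Cset G mul iv E"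
    using b E_zero unfolding c_def Cset_def Bset_def by auto
  then have "(\<lambda>i. b i - c i) \<in> Dset G mul iv E"
    using b Bset_diff Cset_subset_Bset unfolding Dset_def c_def by auto
  then show "eqA G mul iv sm \<beta> one (phi G b) (phi G c)"
    using Dset_subset_NA b c_C Cset_subset_Bset phi_Bset by (auto simp: eqA_iff)
qed

lemma phi_Cset_inj:
  assumes c: "c \<in> Cset G mul iv E" and c': "c' \<in> Cset G mul iv E"
    and eq: "eqA G mul iv sm \<beta> one (phi G c) (phi G c')"
  shows "c = c'"
proof
  fix i :: "'g \<times> 'g"
  obtain g h where i: "i = (g, h)" by (cases i)
  have B: "c \<in> Bset G E" "c' \<in> Bset G E" using c c' Cset_subset_Bset by auto
  then have "(\<lambda>i. c i - c' i) \<in> NA G mul iv sm \<beta> one"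
    using eq phi_Bset by (simp add: eqA_iff)
  then have "d g = r h \<Longrightarrow> c (g, h) - c' (g, h) = 0"
    using Bset_NA_composable_zero[OF Bset_diff[OF B]] by blast
  moreover have "d g \<noteq> r h \<Longrightarrow> c (g, h) = 0 \<and> c' (g, h) = 0"
    using c c' unfolding Cset_def by blast
  ultimately show "c i = c' i" unfolding i by force
qed

lemma B0set_subset_Cset: "B0set G mul iv E \<subseteq> Cset G mul iv E"
  unfolding B0set_def Cset_def by (clarsimp, metis)

lemma multB_B0set:
  assumes x: "x \<in> B0set G mul iv E" and y: "y \<in> B0set G mul iv E"
  shows "multB G mul iv \<beta> x y \<in> B0set G mul iv E"
proof -
  have "multB G mul iv \<beta> x y (c, h) = 0" if "\<not> (d c = r c \<and> r c = r h)" for c h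
    unfolding multB_def split
  proof (intro sum.neutral ballI)
    fix a g assume a: "a \<in> G" and g: "g \<in> G"
    let ?k = "mul g (iv h)"
    show "(if h \<in> G \<and> d g = d h \<and> d a = r ?k \<and> mul a ?k = c
        then x (a, g) * \<beta> a (y (?k, h)) else 0) = 0"
    proof (cases "h \<in> G \<and> d g = d h \<and> d a = r ?k \<and> mul a ?k = c \<and> x (a, g) \<noteq> 0")
      case True
      then have "d a = r a \<and> r a = r g"
        using x unfolding B0set_def by blast
      then have "\<not> (d ?k = r ?k \<and> r ?k = r h)"
        using that True mul_inv_laws[OF a g] by metis
      then have "y (?k, h) = 0"
        using y unfolding B0set_def by blast
      then show ?thesis using beta_zero[OF a] by simp
    qed auto
  qed
  then show ?thesis
    using multB_Bset x y unfolding B0set_def by blast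
qed

lemma B0set_add: "x \<in> B0set G mul iv E \<Longrightarrow> y \<in> B0set G mul iv E \<Longrightarrow> (\<lambda>i. x i + y i) \<in> B0set G mul iv E"
  unfolding B0set_def Bset_def using E_add by auto

lemma B0set_sm: "x \<in> B0set G mul iv E \<Longrightarrow> (\<lambda>i. sm c (x i)) \<in> B0set G mul iv E"
  unfolding B0set_def Bset_def using E_sm by auto

end

theorem theorem5p2:
  fixes G :: "'g set" and mul :: "'g \<Rightarrow> 'g \<Rightarrow> 'g" and iv :: "'g \<Rightarrow> 'g"
    and sm :: "'k::comm_ring_1 \<Rightarrow> 'r::ring_1 \<Rightarrow> 'r"
    and E :: "'g \<Rightarrow> 'r set" and \<beta> :: "'g \<Rightarrow> 'r \<Rightarrow> 'r" and one :: "'g \<Rightarrow> 'r"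
  assumes "setting G mul iv sm E \<beta> one"
  shows
    \<comment> \<open>phi is a homomorphism of K-algebras B \<rightarrow> \<A>\<close>
    "(\<forall>b\<in>Bset G E. \<forall>b'\<in>Bset G E.
        eqA G mul iv sm \<beta> one (phi G (multB G mul iv \<beta> b b'))
            (multA G mul iv \<beta> one (phi G b) (phi G b'))) \<and>
     (\<forall>b\<in>Bset G E. \<forall>b'\<in>Bset G E.
        eqA G mul iv sm \<beta> one (phi G (\<lambda>i. b i + b' i)) (\<lambda>i. phi G b i + phi G b' i)) \<and>
     (\<forall>c. \<forall>b\<in>Bset G E.
        eqA G mul iv sm \<beta> one (phi G (\<lambda>i. sm c (b i))) (\<lambda>i. sm c (phi G b i))) \<and>
     \<comment> \<open>ker phi = D\<close>
     {b \<in> Bset G E. eqA G mul iv sm \<beta> one (phi G b) (\<lambda>i. 0)} = Dset G mul iv E \<and>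
     \<comment> \<open>phi(B) = phi(C)\<close>
     Cset G mul iv E \<subseteq> Bset G E \<and>
     (\<forall>b\<in>Bset G E. \<exists>c\<in>Cset G mul iv E. eqA G mul iv sm \<beta> one (phi G b) (phi G c)) \<and>
     \<comment> \<open>phi is injective on C\<close>
     (\<forall>c\<in>Cset G mul iv E. \<forall>c'\<in>Cset G mul iv E.
        eqA G mul iv sm \<beta> one (phi G c) (phi G c') \<longrightarrow> c = c') \<and>
     \<comment> \<open>B_0 is a subalgebra of B contained in C, hence isomorphic via phi to a subalgebra of \<A>\<close>
     B0set G mul iv E \<subseteq> Cset G mul iv E \<and>
     (\<forall>c. \<forall>x\<in>B0set G mul iv E. \<forall>y\<in>B0set G mul iv E.
        multB G mul iv \<beta> x y \<in> B0set G mul iv E \<and> (\<lambda>i. x i + y i) \<in> B0set G mul iv E \<and>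
        (\<lambda>i. sm c (x i)) \<in> B0set G mul iv E)"
proof -
  interpret skew_setting G mul iv sm E \<beta> one
    by unfold_locales (rule assms)
  show ?thesis
    using ker_phi Cset_subset_Bset phi_Bset_eq_phi_Cset phi_Cset_inj B0set_subset_Cset
      multB_B0set B0set_add B0set_sm
    by (simp add: phi_multB phi_add phi_sm eqA_refl)
qed

end
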